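(* Let $X$ and $Y$ be topological spaces, and let $\delta_X=(\mathcal{A}_X,\partial_X,\Omega_X)$ and $\delta_Y=(\mathcal{A}_Y,\partial_Y,\Omega_Y)$ be differential triads over $X$ and $Y$, respectively. Assume that $\mathcal{A}_Y$ is a functional algebra sheaf. Then every constant map $c:X\to Y$ is differentiable, i.e. there exist $c_{\mathcal{A}}$ and $c_{\Omega}$ such that $(c,c_{\mathcal{A}},c_{\Omega}):\delta_X\to\delta_Y$ is a morphism of differential triads.
   Context: All algebras are unital, commutative, associative complex algebras. A differential triad over a topological space $Z$ is a triple $(\mathcal{A},\partial,\Omega)$ where $\mathcal{A}$ is a sheaf of such algebras over $Z$, $\Omega$ is an $\mathcal{A}$-module (sheaf of modules), and $\partial:\mathcal{A}\to\Omega$ is a $\mathbb{C}$-linear sheaf morphism satisfying $\partial(\alpha\beta)=\alpha\partial(\beta)+\beta\partial(\alpha)$ for all $(\alpha,\beta)$ in the fiber product $\mathcal{A}\times_Z\mathcal{A}$. For a continuous map $f:X\to Y$ and a sheaf $\mathcal{S}$ on $X$, $f_*(\mathcal{S})$ denotes the push-forward sheaf, with sections $f_*(\mathcal{S})(V)=\mathcal{S}(f^{-1}(V))$; $f_*(\delta_X)=(f_*(\mathcal{A}_X),f_*(\partial_X),f_*(\Omega_X))$ is a differential triad over $Y$. A morphism of differential triads $\delta_X\to\delta_Y$ is a triple $(f,f_{\mathcal{A}},f_{\Omega})$ where $f:X\to Y$ is continuous, $f_{\mathcal{A}}:\mathcal{A}_Y\to f_*(\mathcal{A}_X)$ is a unit-preserving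 morphism of sheaves of algebras, $f_{\Omega}:\Omega_Y\to f_*(\Omega_X)$ is a morphism of sheaves of additive groups with $f_\Omega(aw)=f_{\mathcal{A}}(a)f_{\Omega}(w)$ for all $(a,w)\in\mathcal{A}_Y\times_Y\Omega_Y$, and $f_{\Omega}\circ\partial_Y=f_*(\partial_X)\circ f_{\mathcal{A}}$. A continuous map $f$ is called differentiable if it can be completed to such a morphism. A functional algebra sheaf over $Y$ is a sheaf of algebras which is a subsheaf of the sheaf $\mathcal{C}_Y$ of germs of continuous $\mathbb{C}$-valued functions on $Y$. *)

theory Defs
  imports "HOL-Analysis.Analysis"
begin

text \<open>Sheaves over a topological space are represented by their sections over open
sets together with restriction maps (the sheaf of sections of the etale space).
A morphism of sheaves is a family of maps on sections commuting with restrictions;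
identities in the fibre product are equivalent to identities on sections.\<close>

definition presheaf_on :: "'a topology \<Rightarrow> ('a set \<Rightarrow> 's set) \<Rightarrow> ('a set \<Rightarrow> 'a set \<Rightarrow> 's \<Rightarrow> 's) \<Rightarrow> bool" where
  "presheaf_on T sec res \<longleftrightarrow>
     (\<forall>U V. openin T U \<and> openin T V \<and> V \<subseteq> U \<longrightarrow> (\<forall>s\<in>sec U. res U V s \<in> sec V)) \<and>
     (\<forall>U. openin T U \<longrightarrow> (\<forall>s\<in>sec U. res U U s = s)) \<and>
     (\<forall>U V W. openin T U \<and> openin T V \<and> openin T W \<and> W \<subseteq> V \<and> V \<subseteq> U \<longrightarrow>
        (\<forall>s\<in>sec U. res V W (res U V s) = res U W s))"

definition sheaf_on :: "'a topology \<Rightarrow> ('a set \<Rightarrow> 's set) \<Rightarrow> ('a set \<Rightarrow> 'a set \<Rightarrow> 's \<Rightarrow> 's) \<Rightarrow> bool" where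
  "sheaf_on T sec res \<longleftrightarrow> presheaf_on T sec res \<and>
     (\<forall>U \<U>. openin T U \<and> (\<forall>V\<in>\<U>. openin T V) \<and> \<Union>\<U> = U \<longrightarrow>
        (\<forall>s\<in>sec U. \<forall>t\<in>sec U. (\<forall>V\<in>\<U>. res U V s = res U V t) \<longrightarrow> s = t) \<and>
        (\<forall>f. (\<forall>V\<in>\<U>. f V \<in> sec V) \<and>
             (\<forall>V\<in>\<U>. \<forall>W\<in>\<U>. res V (V \<inter> W) (f V) = res W (V \<inter> W) (f W)) \<longrightarrow>
             (\<exists>s\<in>sec U. \<forall>V\<in>\<U>. res U V s = f V)))"

definition calgebra :: "'s set \<Rightarrow> ('s \<Rightarrow> 's \<Rightarrow> 's) \<Rightarrow> ('s \<Rightarrow> 's \<Rightarrow> 's) \<Rightarrow> (complex \<Rightarrow> 's \<Rightarrow> 's)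
     \<Rightarrow> 's \<Rightarrow> 's \<Rightarrow> bool" where
  "calgebra S add mul smul zero one \<longleftrightarrow>
     zero \<in> S \<and> one \<in> S \<and>
     (\<forall>a\<in>S. \<forall>b\<in>S. add a b \<in> S \<and> mul a b \<in> S) \<and> (\<forall>c. \<forall>a\<in>S. smul c a \<in> S) \<and>
     (\<forall>a\<in>S. \<forall>b\<in>S. \<forall>e\<in>S. add (add a b) e = add a (add b e) \<and> mul (mul a b) e = mul a (mul b e)
          \<and> mul a (add b e) = add (mul a b) (mul a e)) \<and>
     (\<forall>a\<in>S. \<forall>b\<in>S. add a b = add b a \<and> mul a b = mul b a) \<and>
     (\<forall>a\<in>S. add zero a = a \<and> mul one a = a \<and> (\<exists>b\<in>S. add a b = zero)) \<and>
     (\<forall>c. \<forall>a\<in>S. \<forall>b\<in>S. smul c (add a b) = add (smul c a) (smul c b)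
          \<and> smul c (mul a b) = mul (smul c a) b) \<and>
     (\<forall>c d. \<forall>a\<in>S. smul (c + d) a = add (smul c a) (smul d a) \<and> smul (c * d) a = smul c (smul d a)) \<and>
     (\<forall>a\<in>S. smul 1 a = a)"

record ('a, 's) alg_sheaf =
  asec :: "'a set \<Rightarrow> 's set"
  ares :: "'a set \<Rightarrow> 'a set \<Rightarrow> 's \<Rightarrow> 's"
  aadd :: "'a set \<Rightarrow> 's \<Rightarrow> 's \<Rightarrow> 's"
  amul :: "'a set \<Rightarrow> 's \<Rightarrow> 's \<Rightarrow> 's"
  asmul :: "'a set \<Rightarrow> complex \<Rightarrow> 's \<Rightarrow> 's"
  azero :: "'a set \<Rightarrow> 's"
  aone :: "'a set \<Rightarrow> 's"

definition alg_sheaf :: "'a topology \<Rightarrow> ('a, 's) alg_sheaf \<Rightarrow> bool" where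
  "alg_sheaf T A \<longleftrightarrow> sheaf_on T (asec A) (ares A) \<and>
     (\<forall>U. openin T U \<longrightarrow> calgebra (asec A U) (aadd A U) (amul A U) (asmul A U) (azero A U) (aone A U)) \<and>
     (\<forall>U V. openin T U \<and> openin T V \<and> V \<subseteq> U \<longrightarrow>
        ares A U V (aone A U) = aone A V \<and>
        (\<forall>a\<in>asec A U. \<forall>b\<in>asec A U.
            ares A U V (aadd A U a b) = aadd A V (ares A U V a) (ares A U V b) \<and>
            ares A U V (amul A U a b) = amul A V (ares A U V a) (ares A U V b)) \<and>
        (\<forall>c. \<forall>a\<in>asec A U. ares A U V (asmul A U c a) = asmul A V c (ares A U V a)))"

record ('a, 's, 'm) mod_sheaf =
  msec :: "'a set \<Rightarrow> 'm set"
  mres :: "'a set \<Rightarrow> 'a set \<Rightarrow> 'm \<Rightarrow> 'm"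
  madd :: "'a set \<Rightarrow> 'm \<Rightarrow> 'm \<Rightarrow> 'm"
  mzero :: "'a set \<Rightarrow> 'm"
  mact :: "'a set \<Rightarrow> 's \<Rightarrow> 'm \<Rightarrow> 'm"

definition mod_sheaf :: "'a topology \<Rightarrow> ('a, 's) alg_sheaf \<Rightarrow> ('a, 's, 'm) mod_sheaf \<Rightarrow> bool" where
  "mod_sheaf T A M \<longleftrightarrow> sheaf_on T (msec M) (mres M) \<and>
     (\<forall>U. openin T U \<longrightarrow>
        mzero M U \<in> msec M U \<and>
        (\<forall>w\<in>msec M U. \<forall>w'\<in>msec M U. madd M U w w' \<in> msec M U \<and> madd M U w w' = madd M U w' w) \<and>
        (\<forall>w\<in>msec M U. \<forall>w'\<in>msec M U. \<forall>w''\<in>msec M U.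
            madd M U (madd M U w w') w'' = madd M U w (madd M U w' w'')) \<and>
        (\<forall>w\<in>msec M U. madd M U (mzero M U) w = w \<and> (\<exists>w'\<in>msec M U. madd M U w w' = mzero M U)) \<and>
        (\<forall>a\<in>asec A U. \<forall>w\<in>msec M U. mact M U a w \<in> msec M U) \<and>
        (\<forall>a\<in>asec A U. \<forall>w\<in>msec M U. \<forall>w'\<in>msec M U.
            mact M U a (madd M U w w') = madd M U (mact M U a w) (mact M U a w')) \<and>
        (\<forall>a\<in>asec A U. \<forall>b\<in>asec A U. \<forall>w\<in>msec M U.
            mact M U (aadd A U a b) w = madd M U (mact M U a w) (mact M U b w) \<and>
            mact M U (amul A U a b) w = mact M U a (mact M U b w)) \<and>
        (\<forall>w\<in>msec M U. mact M U (aone A U) w = w)) \<and>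
     (\<forall>U V. openin T U \<and> openin T V \<and> V \<subseteq> U \<longrightarrow>
        (\<forall>w\<in>msec M U. \<forall>w'\<in>msec M U. mres M U V (madd M U w w') = madd M V (mres M U V w) (mres M U V w')) \<and>
        (\<forall>a\<in>asec A U. \<forall>w\<in>msec M U. mres M U V (mact M U a w) = mact M V (ares A U V a) (mres M U V w)))"

text \<open>The \<open>\<complex>\<close>-vector space structure of \<open>M\<close> is the one induced via \<open>c \<mapsto> c\<cdot>1\<close>.\<close>
definition diff_triad :: "'a topology \<Rightarrow> ('a, 's) alg_sheaf \<Rightarrow> ('a set \<Rightarrow> 's \<Rightarrow> 'm)
     \<Rightarrow> ('a, 's, 'm) mod_sheaf \<Rightarrow> bool" where
  "diff_triad T A d M \<longleftrightarrow> alg_sheaf T A \<and> mod_sheaf T A M \<and>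
     (\<forall>U. openin T U \<longrightarrow>
        (\<forall>a\<in>asec A U. d U a \<in> msec M U) \<and>
        (\<forall>a\<in>asec A U. \<forall>b\<in>asec A U.
            d U (aadd A U a b) = madd M U (d U a) (d U b) \<and>
            d U (amul A U a b) = madd M U (mact M U a (d U b)) (mact M U b (d U a))) \<and>
        (\<forall>c. \<forall>a\<in>asec A U. d U (asmul A U c a) = mact M U (asmul A U c (aone A U)) (d U a))) \<and>
     (\<forall>U V. openin T U \<and> openin T V \<and> V \<subseteq> U \<longrightarrow>
        (\<forall>a\<in>asec A U. mres M U V (d U a) = d V (ares A U V a)))"

text \<open>Functional algebra sheaf: a subsheaf of algebras of the sheaf of continuous
complex functions; sections over \<open>V\<close> are continuous functions on \<open>V\<close> (extensional
outside \<open>V\<close>), restriction is restriction of functions, operations are pointwise.\<close>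
definition functional_alg_sheaf :: "'b topology \<Rightarrow> ('b, 'b \<Rightarrow> complex) alg_sheaf \<Rightarrow> bool" where
  "functional_alg_sheaf Y A \<longleftrightarrow> alg_sheaf Y A \<and>
     (\<forall>V. openin Y V \<longrightarrow>
        asec A V \<subseteq> {g. continuous_map (subtopology Y V) euclidean g \<and> g \<in> extensional V} \<and>
        azero A V = restrict (\<lambda>_. 0) V \<and> aone A V = restrict (\<lambda>_. 1) V \<and>
        (\<forall>g\<in>asec A V. \<forall>h\<in>asec A V.
            aadd A V g h = restrict (\<lambda>y. g y + h y) V \<and> amul A V g h = restrict (\<lambda>y. g y * h y) V) \<and>
        (\<forall>c. \<forall>g\<in>asec A V. asmul A V c g = restrict (\<lambda>y. c * g y) V) \<and>
        (\<forall>W. openin Y W \<and> W \<subseteq> V \<longrightarrow> (\<forall>g\<in>asec A V. ares A V W g = restrict g W)))"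

text \<open>Morphism \<open>(f, fA, fO)\<close> of differential triads, with the push-forward sheaves written
out: \<open>f\<^sub>*(S)(V) = S(f\<^sup>-\<^sup>1(V))\<close>.\<close>
definition triad_morphism ::
  "'a topology \<Rightarrow> ('a, 'sx) alg_sheaf \<Rightarrow> ('a set \<Rightarrow> 'sx \<Rightarrow> 'mx) \<Rightarrow> ('a, 'sx, 'mx) mod_sheaf \<Rightarrow>
   'b topology \<Rightarrow> ('b, 'sy) alg_sheaf \<Rightarrow> ('b set \<Rightarrow> 'sy \<Rightarrow> 'my) \<Rightarrow> ('b, 'sy, 'my) mod_sheaf \<Rightarrow>
   ('a \<Rightarrow> 'b) \<Rightarrow> ('b set \<Rightarrow> 'sy \<Rightarrow> 'sx) \<Rightarrow> ('b set \<Rightarrow> 'my \<Rightarrow> 'mx) \<Rightarrow> bool" where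
  "triad_morphism X AX dX MX Y AY dY MY f fA fO \<longleftrightarrow>
     continuous_map X Y f \<and>
     (let P = (\<lambda>V. topspace X \<inter> f -` V) in
      (\<forall>V. openin Y V \<longrightarrow>
         (\<forall>a\<in>asec AY V. fA V a \<in> asec AX (P V)) \<and>
         fA V (aone AY V) = aone AX (P V) \<and>
         (\<forall>a\<in>asec AY V. \<forall>b\<in>asec AY V.
             fA V (aadd AY V a b) = aadd AX (P V) (fA V a) (fA V b) \<and>
             fA V (amul AY V a b) = amul AX (P V) (fA V a) (fA V b)) \<and>
         (\<forall>c. \<forall>a\<in>asec AY V. fA V (asmul AY V c a) = asmul AX (P V) c (fA V a)) \<and>
         (\<forall>w\<in>msec MY V. fO V w \<in> msec MX (P V)) \<and>
         (\<forall>w\<in>msec MY V. \<forall>w'\<in>msec MY V. fO V (madd MY V w w') = madd MX (P V) (fO V w) (fO V w')) \<and>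
         (\<forall>a\<in>asec AY V. \<forall>w\<in>msec MY V. fO V (mact MY V a w) = mact MX (P V) (fA V a) (fO V w)) \<and>
         (\<forall>a\<in>asec AY V. fO V (dY V a) = dX (P V) (fA V a))) \<and>
      (\<forall>V W. openin Y V \<and> openin Y W \<and> W \<subseteq> V \<longrightarrow>
         (\<forall>a\<in>asec AY V. ares AX (P V) (P W) (fA V a) = fA W (ares AY V W a)) \<and>
         (\<forall>w\<in>msec MY V. mres MX (P V) (P W) (fO V w) = fO W (mres MY V W w))))"

definition differentiable_map where
  "differentiable_map X AX dX MX Y AY dY MY f \<longleftrightarrow>
     (\<exists>fA fO. triad_morphism X AX dX MX Y AY dY MY f fA fO)"

end

theory Submission
  imports Defs
begin

text \<open>If \<open>c\<close> is constant with value \<open>y\<^sub>0\<close>, the preimage of an open \<open>V \<subseteq> Y\<close> is all of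
\<open>X\<close> when \<open>y\<^sub>0 \<in> V\<close> and empty otherwise. Take \<open>c\<^sub>\<A>(a) = a(y\<^sub>0)\<cdot>1\<close> and \<open>c\<^sub>\<Omega> = 0\<close>. Because
\<open>\<A>\<^sub>Y\<close> consists of functions with pointwise operations, evaluation at \<open>y\<^sub>0\<close> is a unital
algebra homomorphism, hence so is \<open>c\<^sub>\<A>\<close>. Compatibility with the differentials holds since
\<open>\<partial>\<^sub>X\<close> kills scalars: \<open>\<partial>(1) = \<partial>(1\<cdot>1) = 2\<partial>(1)\<close> forces \<open>\<partial>(1) = 0\<close>, and \<open>\<partial>(k\<cdot>1) = (k\<cdot>1)\<partial>(1)\<close>. Over an empty preimage every identity is
trivial, as a sheaf has at most one section over \<open>{}\<close>.\<close>

lemma sheaf_on_empty_sections_unique: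
  assumes "sheaf_on T sec res" "s \<in> sec {}" "t \<in> sec {}"
  shows "s = t"
  using conjunct2[OF assms(1)[unfolded sheaf_on_def], rule_format, of "{}" "{}"] assms(2,3)
  by simp

lemma sheaf_on_res_closed:
  assumes "sheaf_on T sec res" "openin T U" "openin T V" "V \<subseteq> U" "s \<in> sec U"
  shows "res U V s \<in> sec V"
  using assms(1)[unfolded sheaf_on_def presheaf_on_def, THEN conjunct1, THEN conjunct1,
      rule_format, of U V s] assms(2-5)
  by simp

lemma
  assumes "calgebra S add mul smul zero one"
  shows calgebra_one_closed: "one \<in> S"
    and calgebra_add_closed: "a \<in> S \<Longrightarrow> b \<in> S \<Longrightarrow> add a b \<in> S"
    and calgebra_mult_closed: "a \<in> S \<Longrightarrow> b \<in> S \<Longrightarrow> mul a b \<in> S"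
    and calgebra_smult_closed: "a \<in> S \<Longrightarrow> smul k a \<in> S"
    and calgebra_mult_one_left: "a \<in> S \<Longrightarrow> mul one a = a"
    and calgebra_smult_one: "a \<in> S \<Longrightarrow> smul 1 a = a"
    and calgebra_smult_add: "a \<in> S \<Longrightarrow> smul (k + l) a = add (smul k a) (smul l a)"
    and calgebra_smult_smult: "a \<in> S \<Longrightarrow> smul (k * l) a = smul k (smul l a)"
    and calgebra_smult_mult_left: "a \<in> S \<Longrightarrow> b \<in> S \<Longrightarrow> smul k (mul a b) = mul (smul k a) b"
  using assms unfolding calgebra_def by blast+

lemma
  assumes "alg_sheaf T A"
  shows alg_sheaf_sheaf_on: "sheaf_on T (asec A) (ares A)"
    and alg_sheaf_calgebra: "openin T U \<Longrightarrow>
      calgebra (asec A U) (aadd A U) (amul A U) (asmul A U) (azero A U) (aone A U)"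
    and alg_sheaf_res_one: "openin T U \<Longrightarrow> openin T V \<Longrightarrow> V \<subseteq> U \<Longrightarrow>
      ares A U V (aone A U) = aone A V"
    and alg_sheaf_res_smult: "openin T U \<Longrightarrow> openin T V \<Longrightarrow> V \<subseteq> U \<Longrightarrow> a \<in> asec A U \<Longrightarrow>
      ares A U V (asmul A U k a) = asmul A V k (ares A U V a)"
  using assms unfolding alg_sheaf_def by meson+

definition const_section :: "('a, 's) alg_sheaf \<Rightarrow> 'a set \<Rightarrow> complex \<Rightarrow> 's" where
  "const_section A U k = asmul A U k (aone A U)"

context
  fixes T :: "'a topology" and A :: "('a, 's) alg_sheaf" and U :: "'a set"
  assumes alg: "alg_sheaf T A" and U: "openin T U"
begin

lemma alg_sheaf_one_closed: "aone A U \<in> asec A U"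
  by (rule calgebra_one_closed[OF alg_sheaf_calgebra[OF alg U]])

lemma const_section_closed: "const_section A U k \<in> asec A U"
  unfolding const_section_def
  by (rule calgebra_smult_closed[OF alg_sheaf_calgebra[OF alg U] alg_sheaf_one_closed])

lemma const_section_one: "const_section A U 1 = aone A U"
  unfolding const_section_def
  by (rule calgebra_smult_one[OF alg_sheaf_calgebra[OF alg U] alg_sheaf_one_closed])

lemma const_section_add:
  "const_section A U (k + l) = aadd A U (const_section A U k) (const_section A U l)"
  unfolding const_section_def
  by (rule calgebra_smult_add[OF alg_sheaf_calgebra[OF alg U] alg_sheaf_one_closed])

lemma const_section_smult: "asmul A U k (const_section A U l) = const_section A U (k * l)"
  unfolding const_section_def
  by (rule calgebra_smult_smult[OF alg_sheaf_calgebra[OF alg U] alg_sheaf_one_closed, symmetric])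

lemma const_section_mult:
  "const_section A U (k * l) = amul A U (const_section A U k) (const_section A U l)"
proof -
  note cal = alg_sheaf_calgebra[OF alg U]
  have "amul A U (const_section A U k) (const_section A U l)
      = asmul A U k (amul A U (aone A U) (const_section A U l))"
    unfolding const_section_def
    by (rule calgebra_smult_mult_left[OF cal alg_sheaf_one_closed
          const_section_closed[unfolded const_section_def], symmetric])
  also have "\<dots> = const_section A U (k * l)"
    by (simp add: calgebra_mult_one_left[OF cal const_section_closed] const_section_smult)
  finally show ?thesis by simp
qed

lemma const_section_res:
  assumes "openin T V" "V \<subseteq> U"
  shows "ares A U V (const_section A U k) = const_section A V k"
  unfolding const_section_def
  using alg_sheaf_res_smult[OF alg U assms alg_sheaf_one_closed] alg_sheaf_res_one[OF alg U assms]
  by simp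

end

lemma
  assumes "mod_sheaf T A M" "openin T U"
  shows mod_sheaf_zero_closed: "mzero M U \<in> msec M U"
    and mod_sheaf_add_commute: "w \<in> msec M U \<Longrightarrow> w' \<in> msec M U \<Longrightarrow> madd M U w w' = madd M U w' w"
    and mod_sheaf_add_assoc: "w \<in> msec M U \<Longrightarrow> w' \<in> msec M U \<Longrightarrow> w'' \<in> msec M U \<Longrightarrow>
      madd M U (madd M U w w') w'' = madd M U w (madd M U w' w'')"
    and mod_sheaf_add_zero_left: "w \<in> msec M U \<Longrightarrow> madd M U (mzero M U) w = w"
    and mod_sheaf_add_inverse: "w \<in> msec M U \<Longrightarrow> \<exists>w'\<in>msec M U. madd M U w w' = mzero M U"
    and mod_sheaf_act_closed: "a \<in> asec A U \<Longrightarrow> w \<in> msec M U \<Longrightarrow> mact M U a w \<in> msec M U"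
    and mod_sheaf_act_add: "a \<in> asec A U \<Longrightarrow> w \<in> msec M U \<Longrightarrow> w' \<in> msec M U \<Longrightarrow>
      mact M U a (madd M U w w') = madd M U (mact M U a w) (mact M U a w')"
    and mod_sheaf_act_one: "w \<in> msec M U \<Longrightarrow> mact M U (aone A U) w = w"
    and mod_sheaf_res_add: "openin T V \<Longrightarrow> V \<subseteq> U \<Longrightarrow> w \<in> msec M U \<Longrightarrow> w' \<in> msec M U \<Longrightarrow>
      mres M U V (madd M U w w') = madd M V (mres M U V w) (mres M U V w')"
  using assms unfolding mod_sheaf_def by meson+

lemma mod_sheaf_sheaf_on: "mod_sheaf T A M \<Longrightarrow> sheaf_on T (msec M) (mres M)"
  unfolding mod_sheaf_def by blast

context
  fixes T :: "'a topology" and A :: "('a, 's) alg_sheaf" and M :: "('a, 's, 'm) mod_sheaf"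
  assumes mod: "mod_sheaf T A M"
begin

lemma mod_sheaf_add_zero_zero:
  "openin T U \<Longrightarrow> madd M U (mzero M U) (mzero M U) = mzero M U"
  using mod_sheaf_add_zero_left[OF mod _ mod_sheaf_zero_closed[OF mod]] .

lemma mod_sheaf_idem_imp_zero:
  assumes U: "openin T U" and w: "w \<in> msec M U" and idem: "madd M U w w = w"
  shows "w = mzero M U"
proof -
  obtain w' where w': "w' \<in> msec M U" "madd M U w w' = mzero M U"
    using mod_sheaf_add_inverse[OF mod U w] by blast
  have "mzero M U = madd M U (madd M U w w) w'" using w' idem by simp
  also have "\<dots> = madd M U w (mzero M U)"
    using mod_sheaf_add_assoc[OF mod U w w w'(1)] w'(2) by simp
  also have "\<dots> = w"
    using mod_sheaf_add_commute[OF mod U w mod_sheaf_zero_closed[OF mod U]]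
      mod_sheaf_add_zero_left[OF mod U w] by simp
  finally show ?thesis by simp
qed

lemma mod_sheaf_act_zero:
  assumes U: "openin T U" and a: "a \<in> asec A U"
  shows "mact M U a (mzero M U) = mzero M U"
proof (rule mod_sheaf_idem_imp_zero[OF U])
  note zero = mod_sheaf_zero_closed[OF mod U]
  show "mact M U a (mzero M U) \<in> msec M U"
    by (rule mod_sheaf_act_closed[OF mod U a zero])
  show "madd M U (mact M U a (mzero M U)) (mact M U a (mzero M U)) = mact M U a (mzero M U)"
    using mod_sheaf_act_add[OF mod U a zero zero] mod_sheaf_add_zero_zero[OF U] by metis
qed

lemma mod_sheaf_res_zero:
  assumes U: "openin T U" and V: "openin T V" "V \<subseteq> U"
  shows "mres M U V (mzero M U) = mzero M V"
proof (rule mod_sheaf_idem_imp_zero[OF V(1)])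
  note zero = mod_sheaf_zero_closed[OF mod U]
  show "mres M U V (mzero M U) \<in> msec M V"
    by (rule sheaf_on_res_closed[OF mod_sheaf_sheaf_on[OF mod] U V zero])
  show "madd M V (mres M U V (mzero M U)) (mres M U V (mzero M U)) = mres M U V (mzero M U)"
    using mod_sheaf_res_add[OF mod U V zero zero] mod_sheaf_add_zero_zero[OF U] by metis
qed

end

lemma
  assumes "diff_triad T A d M"
  shows diff_triad_alg_sheaf: "alg_sheaf T A"
    and diff_triad_mod_sheaf: "mod_sheaf T A M"
    and diff_triad_deriv_closed: "openin T U \<Longrightarrow> a \<in> asec A U \<Longrightarrow> d U a \<in> msec M U"
    and diff_triad_leibniz: "openin T U \<Longrightarrow> a \<in> asec A U \<Longrightarrow> b \<in> asec A U \<Longrightarrow>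
      d U (amul A U a b) = madd M U (mact M U a (d U b)) (mact M U b (d U a))"
    and diff_triad_deriv_smult: "openin T U \<Longrightarrow> a \<in> asec A U \<Longrightarrow>
      d U (asmul A U k a) = mact M U (asmul A U k (aone A U)) (d U a)"
  using assms unfolding diff_triad_def by meson+

lemma diff_triad_deriv_one:
  assumes dt: "diff_triad T A d M" and U: "openin T U"
  shows "d U (aone A U) = mzero M U"
proof (rule mod_sheaf_idem_imp_zero[OF diff_triad_mod_sheaf[OF dt] U])
  note alg = diff_triad_alg_sheaf[OF dt]
  note one = alg_sheaf_one_closed[OF alg U]
  show d1: "d U (aone A U) \<in> msec M U"
    by (rule diff_triad_deriv_closed[OF dt U one])
  have "amul A U (aone A U) (aone A U) = aone A U"
    by (rule calgebra_mult_one_left[OF alg_sheaf_calgebra[OF alg U] one])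
  then show "madd M U (d U (aone A U)) (d U (aone A U)) = d U (aone A U)"
    using diff_triad_leibniz[OF dt U one one]
      mod_sheaf_act_one[OF diff_triad_mod_sheaf[OF dt] U d1] by metis
qed

lemma diff_triad_deriv_const_section:
  assumes dt: "diff_triad T A d M" and U: "openin T U"
  shows "d U (const_section A U k) = mzero M U"
proof -
  note alg = diff_triad_alg_sheaf[OF dt]
  have "d U (const_section A U k) = mact M U (const_section A U k) (d U (aone A U))"
    unfolding const_section_def
    by (rule diff_triad_deriv_smult[OF dt U alg_sheaf_one_closed[OF alg U]])
  then show ?thesis
    using diff_triad_deriv_one[OF dt U]
      mod_sheaf_act_zero[OF diff_triad_mod_sheaf[OF dt] U const_section_closed[OF alg U]] by simp
qed

lemma
  assumes "functional_alg_sheaf Y A" "openin Y V"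
  shows functional_alg_sheaf_one: "aone A V = restrict (\<lambda>_. 1) V"
    and functional_alg_sheaf_add: "a \<in> asec A V \<Longrightarrow> b \<in> asec A V \<Longrightarrow>
      aadd A V a b = restrict (\<lambda>y. a y + b y) V"
    and functional_alg_sheaf_mult: "a \<in> asec A V \<Longrightarrow> b \<in> asec A V \<Longrightarrow>
      amul A V a b = restrict (\<lambda>y. a y * b y) V"
    and functional_alg_sheaf_smult: "a \<in> asec A V \<Longrightarrow> asmul A V k a = restrict (\<lambda>y. k * a y) V"
    and functional_alg_sheaf_res: "openin Y W \<Longrightarrow> W \<subseteq> V \<Longrightarrow> a \<in> asec A V \<Longrightarrow>
      ares A V W a = restrict a W"
  using assms unfolding functional_alg_sheaf_def by meson+

lemma continuous_map_constant_on_topspace: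
  assumes "c ` topspace X \<subseteq> topspace Y" and "\<forall>x\<in>topspace X. c x = y\<^sub>0"
  shows "continuous_map X Y c"
proof (cases "topspace X = {}")
  case False
  then obtain x where "x \<in> topspace X" by blast
  then have "y\<^sub>0 \<in> topspace Y" using assms by force
  then have "continuous_map X Y (\<lambda>_. y\<^sub>0)" by simp
  then show ?thesis by (rule continuous_map_eq) (use assms(2) in simp)
qed simp

lemma triad_morphism_constant_map:
  assumes dX: "diff_triad X AX dX MX" and fY: "functional_alg_sheaf Y AY"
    and cont: "continuous_map X Y c" and const: "\<forall>x\<in>topspace X. c x = y\<^sub>0"
  shows "triad_morphism X AX dX MX Y AY dY MY c
    (\<lambda>V a. const_section AX (topspace X \<inter> c -` V) (a y\<^sub>0)) (\<lambda>V w. mzero MX (topspace X \<inter> c -` V))"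
proof -
  let ?P = "\<lambda>V. topspace X \<inter> c -` V"
  note algX = diff_triad_alg_sheaf[OF dX] and modX = diff_triad_mod_sheaf[OF dX]
  have P_eq: "?P V = (if y\<^sub>0 \<in> V then topspace X else {})" for V
    using const by auto
  have P_open: "openin X (?P V)" for V
    by (simp add: P_eq)
  have P_mono: "?P W \<subseteq> ?P V" if "W \<subseteq> V" for V W
    using that by auto
  note calX = alg_sheaf_calgebra[OF algX P_open]
    and const_closed = const_section_closed[OF algX P_open]
  have sections_eqI: "s = t"
    if "s \<in> asec AX (?P V)" "t \<in> asec AX (?P V)" "y\<^sub>0 \<in> V \<Longrightarrow> s = t" for V s t
    using sheaf_on_empty_sections_unique[OF alg_sheaf_sheaf_on[OF algX]] that P_eq[of V]
    by (cases "y\<^sub>0 \<in> V") auto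
  have hom_one: "const_section AX (?P V) (aone AY V y\<^sub>0) = aone AX (?P V)" if "openin Y V" for V
    by (rule sections_eqI[where V = V])
      (simp_all add: const_closed alg_sheaf_one_closed[OF algX P_open]
        functional_alg_sheaf_one[OF fY that] const_section_one[OF algX P_open])
  have hom_add: "const_section AX (?P V) (aadd AY V a b y\<^sub>0) =
      aadd AX (?P V) (const_section AX (?P V) (a y\<^sub>0)) (const_section AX (?P V) (b y\<^sub>0))"
    if "openin Y V" "a \<in> asec AY V" "b \<in> asec AY V" for V a b
    by (rule sections_eqI[where V = V])
      (simp_all add: const_closed calgebra_add_closed[OF calX] functional_alg_sheaf_add[OF fY that]
        const_section_add[OF algX P_open])
  have hom_mult: "const_section AX (?P V) (amul AY V a b y\<^sub>0) =
      amul AX (?P V) (const_section AX (?P V) (a y\<^sub>0)) (const_section AX (?P V) (b y\<^sub>0))"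
    if "openin Y V" "a \<in> asec AY V" "b \<in> asec AY V" for V a b
    by (rule sections_eqI[where V = V])
      (simp_all add: const_closed calgebra_mult_closed[OF calX] functional_alg_sheaf_mult[OF fY that]
        const_section_mult[OF algX P_open])
  have hom_smult: "const_section AX (?P V) (asmul AY V k a y\<^sub>0) =
      asmul AX (?P V) k (const_section AX (?P V) (a y\<^sub>0))"
    if "openin Y V" "a \<in> asec AY V" for V k a
    by (rule sections_eqI[where V = V])
      (simp_all add: const_closed calgebra_smult_closed[OF calX] functional_alg_sheaf_smult[OF fY that]
        const_section_smult[OF algX P_open])
  have hom_res: "ares AX (?P V) (?P W) (const_section AX (?P V) (a y\<^sub>0)) =
      const_section AX (?P W) (ares AY V W a y\<^sub>0)"
    if "openin Y V" "openin Y W" "W \<subseteq> V" "a \<in> asec AY V" for V W a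
  proof -
    have "ares AX (?P V) (?P W) (const_section AX (?P V) (a y\<^sub>0)) = const_section AX (?P W) (a y\<^sub>0)"
      by (rule const_section_res[OF algX P_open P_open P_mono[OF that(3)]])
    also have "\<dots> = const_section AX (?P W) (ares AY V W a y\<^sub>0)"
      by (rule sections_eqI[where V = W])
        (simp_all add: const_closed functional_alg_sheaf_res[OF fY that])
    finally show ?thesis .
  qed
  show ?thesis
    unfolding triad_morphism_def Let_def
    by (intro conjI allI impI ballI)
      (simp_all add: cont hom_one hom_add hom_mult hom_smult hom_res const_closed
        mod_sheaf_zero_closed[OF modX P_open] mod_sheaf_add_zero_zero[OF modX P_open]
        mod_sheaf_act_zero[OF modX P_open] diff_triad_deriv_const_section[OF dX P_open]
        mod_sheaf_res_zero[OF modX P_open P_open P_mono])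
qed

theorem proposition3p1:
  fixes X :: "'a topology" and Y :: "'b topology"
    and AX :: "('a, 'sx) alg_sheaf" and dX :: "'a set \<Rightarrow> 'sx \<Rightarrow> 'mx" and MX :: "('a, 'sx, 'mx) mod_sheaf"
    and AY :: "('b, 'b \<Rightarrow> complex) alg_sheaf" and dY :: "'b set \<Rightarrow> ('b \<Rightarrow> complex) \<Rightarrow> 'my"
    and MY :: "('b, 'b \<Rightarrow> complex, 'my) mod_sheaf"
    and c :: "'a \<Rightarrow> 'b"
  assumes "diff_triad X AX dX MX"
    and "diff_triad Y AY dY MY"
    and "functional_alg_sheaf Y AY"
    and "c ` topspace X \<subseteq> topspace Y"
    and "\<forall>x\<in>topspace X. \<forall>x'\<in>topspace X. c x = c x'"
  shows "differentiable_map X AX dX MX Y AY dY MY c"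
proof -
  define y\<^sub>0 where "y\<^sub>0 = c (SOME x. x \<in> topspace X)"
  have const: "\<forall>x\<in>topspace X. c x = y\<^sub>0"
    using assms(5) unfolding y\<^sub>0_def by (metis someI)
  have "continuous_map X Y c"
    by (rule continuous_map_constant_on_topspace[OF assms(4) const])
  with triad_morphism_constant_map[OF assms(1,3) _ const] show ?thesis
    unfolding differentiable_map_def by blast
qed

end
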